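(* Let $\mathcal A\in\mathbb Q^{n\times n\times n_3}$ with $\operatorname{Ind}_{QT}(\mathcal A)=k$, and let $\mathcal A^D\in\mathbb Q^{n\times n\times n_3}$ be its QT-Drazin inverse. Then $\mathtt{bcirc_z}(\mathcal A)^D=\mathtt{bcirc_z}(\mathcal A^D)$, where the left-hand side is the Drazin inverse of the quaternion matrix $\mathtt{bcirc_z}(\mathcal A)$.
   Context: $\mathbb Q$ denotes the real quaternions with the usual Hamilton multiplication; $\mathbb C$ is identified with $\{a_0+a_1\mathbf i\}$. Every quaternion array $A=A_0+A_1\mathbf i+A_2\mathbf j+A_3\mathbf k$ (real $A_t$) is written uniquely as $A=A_{\mathbf d}+\mathbf jA_{\mathbf c}$ with $A_{\mathbf d}=A_0+A_1\mathbf i$, $A_{\mathbf c}=A_2-A_3\mathbf i$. For $\mathcal A\in\mathbb Q^{n_1\times n_2\times n_3}$, $\mathcal A^{(s)}=\mathcal A(:,:,s)$. For a complex tensor $\mathcal C$, $\mathtt{bcirc}(\mathcal C)$ is the block circulant matrix with $(p,q)$ block $\mathcal C^{(((p-q)\bmod n_3)+1)}$. $P_{n_3}$ is the permutation matrix with first row $e_1^T$ and $r$-th row $e_{n_3+2-r}^T$ ($r\ge2$). $\mathtt{bcirc_z}(\mathcal A)=\mathtt{bcirc}(\mathcal A_{\mathbf d})+\mathbf j\,\mathtt{bcirc}(\mathcal A_{\mathbf c})(P_{n_3}\otimes I_{n_2})$. $\mathtt{unfold}(\mathcal B)=[\mathcal B^{(1)};\dots;\mathcal B^{(n_3)}]$,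 $\mathtt{fold}$ its inverse; QT-product $\mathcal A*_Q\mathcal B=\mathtt{fold}(\mathtt{bcirc_z}(\mathcal A)\mathtt{unfold}(\mathcal B))$; identity tensor $\mathcal I$: first frontal slice $I_n$, others zero; $\mathcal A^0=\mathcal I$, $\mathcal A^{k+1}=\mathcal A*_Q\mathcal A^k$. Conjugate transpose of a tensor: for complex $\mathcal C$, $\mathcal C^*$ has frontal slices $(\mathcal C^{(1)})^*$ and $(\mathcal C^{(n_3+2-s)})^*$ ($s\ge2$); $\mathcal A^*$ is defined by $\mathtt{unfold}(\mathcal A^* )=\mathtt{unfold}(\mathcal A_{\mathbf d}^* )-(P_{n_3}\otimes I_{n_2})\mathtt{unfold}(\mathcal A_{\mathbf c}^* )\mathbf j$; $\mathcal U$ is unitary if $\mathcal U^**_Q\mathcal U=\mathcal U*_Q\mathcal U^*=\mathcal I$. QT-rank: given a QT-SVD $\mathcal A=\mathcal U*_Q\mathcal S*_Q\mathcal V^*$ ($\mathcal U,\mathcal V$ unitary, every frontal slice of $\mathcal S$ diagonal), $\operatorname{rank}_{QT}(\mathcal A)=\#\{i\le\min(n_1,n_2):\|\mathcal S(i,i,:)\|_F>0\}$. QT-index $\operatorname{Ind}_{QT}(\mathcal A)$: least integer $k\ge0$ with $\operatorname{rank}_{QT}(\mathcal A^{k+1})=\operatorname{rank}_{QT}(\mathcal A^k)$. QT-Drazin inverse of $\mathcal A$ with $\operatorname{Ind}_{QT}(\mathcal A)=k$: a tensor $\mathcal X=\mathcal A^D$ with $\mathcal A^k*_Q\mathcal X*_Q\mathcal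 A=\mathcal A^k$, $\mathcal X*_Q\mathcal A*_Q\mathcal X=\mathcal X$, $\mathcal A*_Q\mathcal X=\mathcal X*_Q\mathcal A$. For a square quaternion matrix $M$, $\operatorname{Ind}(M)$ is the least $m\ge0$ with $\operatorname{rank}(M^{m+1})=\operatorname{rank}(M^m)$, and its Drazin inverse $M^D$ is the unique $X$ with $M^mXM=M^m$ ($m=\operatorname{Ind}(M)$), $XMX=X$, $MX=XM$. *)

theory Defs
  imports Complex_Main "Jordan_Normal_Form.Matrix"
begin

datatype quat = Quat (qre: real) (qi: real) (qj: real) (qk: real)

lemma quat_eq_iff: "x = y \<longleftrightarrow> qre x = qre y \<and> qi x = qi y \<and> qj x = qj y \<and> qk x = qk y"
  by (cases x; cases y) auto

instantiation quat :: ring_1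
begin
definition "0 = Quat 0 0 0 0"
definition "1 = Quat 1 0 0 0"
definition "x + y = Quat (qre x + qre y) (qi x + qi y) (qj x + qj y) (qk x + qk y)"
definition "x - y = Quat (qre x - qre y) (qi x - qi y) (qj x - qj y) (qk x - qk y)"
definition "- x = Quat (- qre x) (- qi x) (- qj x) (- qk x)"
definition "x * y = Quat
   (qre x * qre y - qi x * qi y - qj x * qj y - qk x * qk y)
   (qre x * qi y + qi x * qre y + qj x * qk y - qk x * qj y)
   (qre x * qj y - qi x * qk y + qj x * qre y + qk x * qi y)
   (qre x * qk y + qi x * qj y - qj x * qi y + qk x * qre y)"
instance
  by standard (auto simp: quat_eq_iff zero_quat_def one_quat_def plus_quat_def
      minus_quat_def uminus_quat_def times_quat_def algebra_simps)
end

definition quat_i :: quat where "quat_i = Quat 0 1 0 0"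
definition quat_j :: quat where "quat_j = Quat 0 0 1 0"

definition of_cpx :: "complex \<Rightarrow> quat" where
  "of_cpx z = Quat (Re z) (Im z) 0 0"

definition qnorm2 :: "quat \<Rightarrow> real" where
  "qnorm2 q = (qre q)\<^sup>2 + (qi q)\<^sup>2 + (qj q)\<^sup>2 + (qk q)\<^sup>2"

definition right_indep_cols :: "quat mat \<Rightarrow> nat set \<Rightarrow> bool" where
  "right_indep_cols M S \<longleftrightarrow> S \<subseteq> {..<dim_col M} \<and>
     (\<forall>c :: nat \<Rightarrow> quat. (\<forall>i<dim_row M. (\<Sum>j\<in>S. M $$ (i, j) * c j) = 0) \<longrightarrow> (\<forall>j\<in>S. c j = 0))"

definition qmat_rank :: "quat mat \<Rightarrow> nat" where
  "qmat_rank M = Max (card ` {S. right_indep_cols M S})"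

definition qmat_ind :: "quat mat \<Rightarrow> nat" where
  "qmat_ind M = (LEAST m. qmat_rank (M ^\<^sub>m (m + 1)) = qmat_rank (M ^\<^sub>m m))"

definition qmat_drazin :: "quat mat \<Rightarrow> quat mat" where
  "qmat_drazin M = (THE X. X \<in> carrier_mat (dim_row M) (dim_row M) \<and>
      M ^\<^sub>m (qmat_ind M) * X * M = M ^\<^sub>m (qmat_ind M) \<and>
      X * M * X = X \<and> M * X = X * M)"

text \<open>A tensor of size \<open>n1 \<times> n2 \<times> n3\<close> is a function of 0-based indices
  \<open>(i, j, s)\<close>, \<open>s\<close> indexing frontal slices, vanishing outside the index box.\<close>
type_synonym 'a tensor = "nat \<Rightarrow> nat \<Rightarrow> nat \<Rightarrow> 'a"

definition tensor_carrier :: "nat \<Rightarrow> nat \<Rightarrow> nat \<Rightarrow> 'a::zero tensor set" where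
  "tensor_carrier n1 n2 n3 = {A. \<forall>i j s. A i j s \<noteq> 0 \<longrightarrow> i < n1 \<and> j < n2 \<and> s < n3}"

text \<open>\<open>A = A_d + j A_c\<close>, \<open>A_d = A0 + A1 i\<close>, \<open>A_c = A2 - A3 i\<close>.\<close>
definition tpart_d :: "quat tensor \<Rightarrow> complex tensor" where
  "tpart_d A = (\<lambda>i j s. Complex (qre (A i j s)) (qi (A i j s)))"
definition tpart_c :: "quat tensor \<Rightarrow> complex tensor" where
  "tpart_c A = (\<lambda>i j s. Complex (qj (A i j s)) (- qk (A i j s)))"

definition cpx_tensor :: "complex tensor \<Rightarrow> quat tensor" where
  "cpx_tensor C = (\<lambda>i j s. of_cpx (C i j s))"

definition bcirc :: "nat \<Rightarrow> nat \<Rightarrow> nat \<Rightarrow> 'a tensor \<Rightarrow> 'a mat" where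
  "bcirc n1 n2 n3 C = mat (n1 * n3) (n2 * n3)
     (\<lambda>(r, c). C (r mod n1) (c mod n2) (nat ((int (r div n1) - int (c div n2)) mod int n3)))"

text \<open>\<open>P_{n3} \<otimes> I_m\<close>: \<open>P\<close> has first row \<open>e_1\<close> and \<open>r\<close>-th row \<open>e_{n3+2-r}\<close> (1-based),
  i.e. 0-based row \<open>r\<close> has its 1 in column \<open>(n3 - r) mod n3\<close>.\<close>
definition perm_P :: "nat \<Rightarrow> 'a::{zero,one} mat" where
  "perm_P n3 = mat n3 n3 (\<lambda>(r, c). if c = (n3 - r) mod n3 then 1 else 0)"

definition kron_I :: "'a::{zero,one} mat \<Rightarrow> nat \<Rightarrow> 'a mat" where
  "kron_I P m = mat (dim_row P * m) (dim_col P * m)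
     (\<lambda>(r, c). if r mod m = c mod m then P $$ (r div m, c div m) else 0)"

definition bcirc_z :: "nat \<Rightarrow> nat \<Rightarrow> nat \<Rightarrow> quat tensor \<Rightarrow> quat mat" where
  "bcirc_z n1 n2 n3 A =
     bcirc n1 n2 n3 (cpx_tensor (tpart_d A)) +
     quat_j \<cdot>\<^sub>m (bcirc n1 n2 n3 (cpx_tensor (tpart_c A)) * kron_I (perm_P n3) n2)"

definition tunfold :: "nat \<Rightarrow> nat \<Rightarrow> nat \<Rightarrow> 'a tensor \<Rightarrow> 'a mat" where
  "tunfold n1 n2 n3 B = mat (n1 * n3) n2 (\<lambda>(r, c). B (r mod n1) c (r div n1))"

definition tfold :: "nat \<Rightarrow> nat \<Rightarrow> nat \<Rightarrow> 'a::zero mat \<Rightarrow> 'a tensor" where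
  "tfold n1 n2 n3 M = (\<lambda>i j s. if i < n1 \<and> j < n2 \<and> s < n3 then M $$ (s * n1 + i, j) else 0)"

definition qt_prod :: "nat \<Rightarrow> nat \<Rightarrow> nat \<Rightarrow> nat \<Rightarrow> quat tensor \<Rightarrow> quat tensor \<Rightarrow> quat tensor" where
  "qt_prod n1 n2 n4 n3 A B = tfold n1 n4 n3 (bcirc_z n1 n2 n3 A * tunfold n2 n4 n3 B)"

definition qt_id :: "nat \<Rightarrow> nat \<Rightarrow> quat tensor" where
  "qt_id n n3 = (\<lambda>i j s. if i < n \<and> j < n \<and> s < n3 \<and> i = j \<and> s = 0 then 1 else 0)"

fun qt_pow :: "nat \<Rightarrow> nat \<Rightarrow> quat tensor \<Rightarrow> nat \<Rightarrow> quat tensor" where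
  "qt_pow n n3 A 0 = qt_id n n3"
| "qt_pow n n3 A (Suc k) = qt_prod n n n n3 A (qt_pow n n3 A k)"

definition ctens_ct :: "nat \<Rightarrow> nat \<Rightarrow> nat \<Rightarrow> complex tensor \<Rightarrow> complex tensor" where
  "ctens_ct n1 n2 n3 C = (\<lambda>i j s. if i < n2 \<and> j < n1 \<and> s < n3
       then cnj (C j i ((n3 - s) mod n3)) else 0)"

definition qt_ct :: "nat \<Rightarrow> nat \<Rightarrow> nat \<Rightarrow> quat tensor \<Rightarrow> quat tensor" where
  "qt_ct n1 n2 n3 A = tfold n2 n1 n3
     (tunfold n2 n1 n3 (cpx_tensor (ctens_ct n1 n2 n3 (tpart_d A)))
      - map_mat (\<lambda>x. x * quat_j)
          (kron_I (perm_P n3) n2 * tunfold n2 n1 n3 (cpx_tensor (ctens_ct n1 n2 n3 (tpart_c A)))))"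

definition qt_unitary :: "nat \<Rightarrow> nat \<Rightarrow> quat tensor \<Rightarrow> bool" where
  "qt_unitary n n3 U \<longleftrightarrow> U \<in> tensor_carrier n n n3 \<and>
     qt_prod n n n n3 (qt_ct n n n3 U) U = qt_id n n3 \<and>
     qt_prod n n n n3 U (qt_ct n n n3 U) = qt_id n n3"

definition is_QT_SVD :: "nat \<Rightarrow> nat \<Rightarrow> nat \<Rightarrow> quat tensor \<Rightarrow> quat tensor \<Rightarrow> quat tensor \<Rightarrow> quat tensor \<Rightarrow> bool" where
  "is_QT_SVD n1 n2 n3 A U S V \<longleftrightarrow>
     qt_unitary n1 n3 U \<and> qt_unitary n2 n3 V \<and>
     S \<in> tensor_carrier n1 n2 n3 \<and> (\<forall>i j s. i \<noteq> j \<longrightarrow> S i j s = 0) \<and>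
     A = qt_prod n1 n2 n2 n3 (qt_prod n1 n1 n2 n3 U S) (qt_ct n2 n2 n3 V)"

definition qt_rank :: "nat \<Rightarrow> nat \<Rightarrow> nat \<Rightarrow> quat tensor \<Rightarrow> nat" where
  "qt_rank n1 n2 n3 A = (SOME r. \<exists>U S V. is_QT_SVD n1 n2 n3 A U S V \<and>
     r = card {i. i < min n1 n2 \<and> sqrt (\<Sum>s<n3. qnorm2 (S i i s)) > 0})"

definition qt_ind :: "nat \<Rightarrow> nat \<Rightarrow> quat tensor \<Rightarrow> nat" where
  "qt_ind n n3 A = (LEAST k. qt_rank n n n3 (qt_pow n n3 A (k + 1)) = qt_rank n n n3 (qt_pow n n3 A k))"

definition is_qt_drazin :: "nat \<Rightarrow> nat \<Rightarrow> nat \<Rightarrow> quat tensor \<Rightarrow> quat tensor \<Rightarrow> bool" where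
  "is_qt_drazin n n3 k A X \<longleftrightarrow>
     qt_prod n n n n3 (qt_prod n n n n3 (qt_pow n n3 A k) X) A = qt_pow n n3 A k \<and>
     qt_prod n n n n3 (qt_prod n n n n3 X A) X = X \<and>
     qt_prod n n n n3 A X = qt_prod n n n n3 X A"

end

theory Submission
  imports Defs
begin

(* The map bcirc_z is multiplicative for the QT-product and sends the identity tensor to the
   identity matrix.  This rests on the splitting q = q_d + j q_c being a Z/2-grading of the
   quaternions: in a QT-product the d-parts combine as a circulant convolution in the block index
   p - q and the j-parts as one in p + q, which is exactly how bcirc_z places them.  Hence the
   three Drazin equations for A and X become the Drazin equations of M = bcirc_z A and
   bcirc_z X at exponent k.  Over a division ring these force rank M^(k+1) = rank M^k, so
   Ind M <= k; writing M^m = M^(m+1) Z for m = Ind M they descend to exponent m, where the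
   Drazin inverse is unique. *)

section \<open>Quaternions form a division ring\<close>

lemma qnorm2_pos: "q \<noteq> 0 \<Longrightarrow> qnorm2 q > 0"
proof -
  assume "q \<noteq> 0"
  then have "qre q \<noteq> 0 \<or> qi q \<noteq> 0 \<or> qj q \<noteq> 0 \<or> qk q \<noteq> 0"
    by (auto simp: quat_eq_iff zero_quat_def)
  then show ?thesis
    unfolding qnorm2_def by (auto simp: add_pos_nonneg add_nonneg_pos)
qed

instantiation quat :: inverse
begin
definition "inverse q =
  Quat (qre q / qnorm2 q) (- qi q / qnorm2 q) (- qj q / qnorm2 q) (- qk q / qnorm2 q)" for q :: quat
definition "x div y = x * inverse y" for x y :: quat
instance ..
end

instance quat :: division_ring
proof
  fix a b :: quat
  show "a / b = a * inverse b" by (simp add: divide_quat_def)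
  show "inverse (0 :: quat) = 0" by (simp add: inverse_quat_def zero_quat_def)
  assume "a \<noteq> 0"
  then have "qnorm2 a \<noteq> 0" using qnorm2_pos by (metis less_irrefl)
  moreover have "qnorm2 a = qre a * qre a + qi a * qi a + qj a * qj a + qk a * qk a"
    by (simp add: qnorm2_def power2_eq_square)
  ultimately show "inverse a * a = 1" and "a * inverse a = 1"
    by (simp_all add: quat_eq_iff inverse_quat_def times_quat_def one_quat_def divide_simps)
qed

section \<open>Linear algebra over a division ring\<close>

(* Vectors are functions nat => 'a of which the coordinates r < N count; scalars act on the right. *)

definition right_independent :: "nat \<Rightarrow> (nat \<Rightarrow> nat \<Rightarrow> 'a::ring_1) \<Rightarrow> nat set \<Rightarrow> bool" where
  "right_independent N V J \<longleftrightarrow>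
     (\<forall>x. (\<forall>r<N. (\<Sum>j\<in>J. V j r * x j) = 0) \<longrightarrow> (\<forall>j\<in>J. x j = 0))"

definition in_right_span :: "nat \<Rightarrow> (nat \<Rightarrow> nat \<Rightarrow> 'a::ring_1) \<Rightarrow> nat set \<Rightarrow> (nat \<Rightarrow> 'a) \<Rightarrow> bool" where
  "in_right_span N V I w \<longleftrightarrow> (\<exists>c. \<forall>r<N. w r = (\<Sum>i\<in>I. V i r * c i))"

lemma right_independent_cong:
  "(\<And>j. j \<in> J \<Longrightarrow> V j = W j) \<Longrightarrow> right_independent N V J \<longleftrightarrow> right_independent N W J"
  unfolding right_independent_def by simp

lemma in_right_span_self:
  fixes V :: "nat \<Rightarrow> nat \<Rightarrow> 'a::ring_1"
  assumes "finite S" "j \<in> S"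
  shows "in_right_span N V S (V j)"
  unfolding in_right_span_def
  by (intro exI[of _ "\<lambda>i. if i = j then 1 else 0"]) (simp add: assms if_distrib sum.delta cong: if_cong)

lemma eliminate_unknown_solution:
  fixes c :: "nat \<Rightarrow> nat \<Rightarrow> 'a::division_ring"
  assumes "finite J" "j0 \<in> J" "c i0 j0 \<noteq> 0"
    and reduced: "\<forall>i\<in>I. (\<Sum>j\<in>J - {j0}. (c i j - c i j0 * inverse (c i0 j0) * c i0 j) * y j) = 0"
  defines "x \<equiv> y(j0 := - (inverse (c i0 j0) * (\<Sum>j\<in>J - {j0}. c i0 j * y j)))"
  shows "\<forall>i\<in>insert i0 I. (\<Sum>j\<in>J. c i j * x j) = 0"
proof
  fix i assume i: "i \<in> insert i0 I"
  define S where "S = (\<Sum>j\<in>J - {j0}. c i0 j * y j)"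
  have "(\<Sum>j\<in>J. c i j * x j) = c i j0 * x j0 + (\<Sum>j\<in>J - {j0}. c i j * x j)"
    using assms(1,2) by (simp add: sum.remove)
  also have "(\<Sum>j\<in>J - {j0}. c i j * x j) = (\<Sum>j\<in>J - {j0}. c i j * y j)"
    unfolding x_def by (intro sum.cong) auto
  finally have sum_J: "(\<Sum>j\<in>J. c i j * x j) = (\<Sum>j\<in>J - {j0}. c i j * y j) - c i j0 * inverse (c i0 j0) * S"
    unfolding x_def S_def by (simp add: mult.assoc)
  show "(\<Sum>j\<in>J. c i j * x j) = 0"
  proof (cases "i = i0")
    case True
    then show ?thesis using sum_J \<open>c i0 j0 \<noteq> 0\<close> unfolding S_def by simp
  next
    case False
    with i have "0 = (\<Sum>j\<in>J - {j0}. (c i j - c i j0 * inverse (c i0 j0) * c i0 j) * y j)"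
      using reduced by simp
    also have "\<dots> = (\<Sum>j\<in>J - {j0}. c i j * y j) - c i j0 * inverse (c i0 j0) * S"
      unfolding S_def by (simp add: left_diff_distrib mult.assoc sum_subtractf sum_distrib_left)
    finally show ?thesis using sum_J by simp
  qed
qed

lemma homogeneous_system_nontrivial_solution:
  fixes c :: "nat \<Rightarrow> nat \<Rightarrow> 'a::division_ring"
  assumes "finite I" "finite J" "card I < card J"
  shows "\<exists>x. (\<forall>i\<in>I. (\<Sum>j\<in>J. c i j * x j) = 0) \<and> (\<exists>j\<in>J. x j \<noteq> 0)"
  using assms
proof (induction I arbitrary: J c rule: finite_induct)
  case empty
  then obtain j where "j \<in> J" by fastforce
  then show ?case by (intro exI[of _ "\<lambda>_. 1"]) auto
next
  case (insert i0 I)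
  show ?case
  proof (cases "\<forall>j\<in>J. c i0 j = 0")
    case True
    from insert.IH[of J c] insert.prems insert.hyps obtain x where
      "\<forall>i\<in>I. (\<Sum>j\<in>J. c i j * x j) = 0" "\<exists>j\<in>J. x j \<noteq> 0" by auto
    with True show ?thesis by (intro exI[of _ x]) auto
  next
    case False
    then obtain j0 where j0: "j0 \<in> J" "c i0 j0 \<noteq> 0" by auto
    have "card I < card (J - {j0})" using insert.prems insert.hyps j0 by auto
    with insert.IH[of "J - {j0}" "\<lambda>i j. c i j - c i j0 * inverse (c i0 j0) * c i0 j"] insert.prems
    obtain y where
      y: "\<forall>i\<in>I. (\<Sum>j\<in>J - {j0}. (c i j - c i j0 * inverse (c i0 j0) * c i0 j) * y j) = 0"
        "\<exists>j\<in>J - {j0}. y j \<noteq> 0"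
      by auto
    from eliminate_unknown_solution[OF insert.prems(1) j0 y(1)] y(2) show ?thesis by fastforce
  qed
qed

lemma independent_card_le_spanning:
  fixes V W :: "nat \<Rightarrow> nat \<Rightarrow> 'a::division_ring"
  assumes "finite I" "finite J" and indep: "right_independent N W J"
    and span: "\<forall>j\<in>J. in_right_span N V I (W j)"
  shows "card J \<le> card I"
proof (rule ccontr)
  assume "\<not> card J \<le> card I"
  obtain C where C: "\<forall>j\<in>J. \<forall>r<N. W j r = (\<Sum>i\<in>I. V i r * C j i)"
    using bchoice[OF span[unfolded in_right_span_def]] by blast
  from homogeneous_system_nontrivial_solution[of I J "\<lambda>i j. C j i"] assms(1,2) \<open>\<not> card J \<le> card I\<close>
  obtain x where x: "\<forall>i\<in>I. (\<Sum>j\<in>J. C j i * x j) = 0" "\<exists>j\<in>J. x j \<noteq> 0"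
    by auto
  have "(\<Sum>j\<in>J. W j r * x j) = 0" if "r < N" for r
  proof -
    have "(\<Sum>j\<in>J. W j r * x j) = (\<Sum>j\<in>J. \<Sum>i\<in>I. V i r * (C j i * x j))"
      using C that by (intro sum.cong) (auto simp: sum_distrib_right mult.assoc)
    also have "\<dots> = (\<Sum>i\<in>I. V i r * (\<Sum>j\<in>J. C j i * x j))"
      by (subst sum.swap) (simp add: sum_distrib_left)
    finally show ?thesis using x(1) by simp
  qed
  with indep x(2) show False unfolding right_independent_def by blast
qed

lemma in_right_span_trans:
  fixes V U :: "nat \<Rightarrow> nat \<Rightarrow> 'a::ring_1"
  assumes "finite L" and U: "\<forall>l\<in>L. in_right_span N V I (U l)" and w: "in_right_span N U L w"
  shows "in_right_span N V I w"
proof -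
  obtain C where C: "\<forall>l\<in>L. \<forall>r<N. U l r = (\<Sum>i\<in>I. V i r * C l i)"
    using bchoice[OF U[unfolded in_right_span_def]] by blast
  from w obtain d where d: "\<forall>r<N. w r = (\<Sum>l\<in>L. U l r * d l)"
    unfolding in_right_span_def by blast
  have "w r = (\<Sum>i\<in>I. V i r * (\<Sum>l\<in>L. C l i * d l))" if "r < N" for r
  proof -
    have "w r = (\<Sum>l\<in>L. \<Sum>i\<in>I. V i r * (C l i * d l))"
      using C d that by (auto simp: sum_distrib_right mult.assoc intro: sum.cong)
    also have "\<dots> = (\<Sum>i\<in>I. V i r * (\<Sum>l\<in>L. C l i * d l))"
      by (subst sum.swap) (simp add: sum_distrib_left)
    finally show ?thesis .
  qed
  then show ?thesis
    unfolding in_right_span_def by (intro exI[of _ "\<lambda>i. \<Sum>l\<in>L. C l i * d l"]) simp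
qed

lemma right_independent_insert:
  fixes V :: "nat \<Rightarrow> nat \<Rightarrow> 'a::division_ring"
  assumes "finite S" "j \<notin> S" and indep: "right_independent N V S"
    and not_span: "\<not> in_right_span N V S (V j)"
  shows "right_independent N V (insert j S)"
  unfolding right_independent_def
proof (intro allI impI)
  fix x assume x: "\<forall>r<N. (\<Sum>i\<in>insert j S. V i r * x i) = 0"
  have sum_insert: "(\<Sum>i\<in>insert j S. V i r * x i) = V j r * x j + (\<Sum>i\<in>S. V i r * x i)" for r
    using assms(1,2) by simp
  have "x j = 0"
  proof (rule ccontr)
    assume "x j \<noteq> 0"
    have "V j r = (\<Sum>i\<in>S. V i r * (- (x i * inverse (x j))))" if "r < N" for r
    proof -
      have "V j r * x j = - (\<Sum>i\<in>S. V i r * x i)"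
        using x that sum_insert[of r] by (simp add: eq_neg_iff_add_eq_0)
      then have "V j r = - (\<Sum>i\<in>S. V i r * x i) * inverse (x j)"
        using \<open>x j \<noteq> 0\<close> by (metis mult.assoc mult.right_neutral right_inverse)
      then show ?thesis by (simp add: sum_distrib_right mult.assoc sum_negf)
    qed
    then have "in_right_span N V S (V j)"
      unfolding in_right_span_def by (intro exI[of _ "\<lambda>i. - (x i * inverse (x j))"]) simp
    with not_span show False ..
  qed
  with x sum_insert have "\<forall>r<N. (\<Sum>i\<in>S. V i r * x i) = 0" by simp
  with indep \<open>x j = 0\<close> show "\<forall>i\<in>insert j S. x i = 0"
    unfolding right_independent_def by blast
qed

section \<open>Rank of quaternion matrices\<close>

definition col_fn :: "'a mat \<Rightarrow> nat \<Rightarrow> nat \<Rightarrow> 'a" where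
  "col_fn M j r = M $$ (r, j)"

lemma right_indep_cols_iff:
  "right_indep_cols M S \<longleftrightarrow> S \<subseteq> {..<dim_col M} \<and> right_independent (dim_row M) (col_fn M) S"
  unfolding right_indep_cols_def right_independent_def col_fn_def by simp

lemma right_indep_cols_finite: "right_indep_cols M S \<Longrightarrow> finite S"
  unfolding right_indep_cols_def using finite_subset by blast

lemma card_le_qmat_rank: "right_indep_cols M S \<Longrightarrow> card S \<le> qmat_rank M"
proof -
  have "{S. right_indep_cols M S} \<subseteq> Pow {..<dim_col M}"
    unfolding right_indep_cols_def by auto
  then have "finite {S. right_indep_cols M S}" by (rule finite_subset) simp
  then show "right_indep_cols M S \<Longrightarrow> card S \<le> qmat_rank M"
    unfolding qmat_rank_def by (intro Max_ge) auto
qed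

lemma obtain_qmat_rank_basis:
  obtains S where "right_indep_cols M S" "card S = qmat_rank M"
proof -
  have "{S. right_indep_cols M S} \<subseteq> Pow {..<dim_col M}"
    unfolding right_indep_cols_def by auto
  then have "finite {S. right_indep_cols M S}" by (rule finite_subset) simp
  moreover have "right_indep_cols M {}" unfolding right_indep_cols_def by simp
  ultimately have "qmat_rank M \<in> card ` {S. right_indep_cols M S}"
    unfolding qmat_rank_def by (intro Max_in) auto
  then show thesis using that by auto
qed

lemma qmat_rank_basis_spans:
  assumes S: "right_indep_cols M S" "card S = qmat_rank M" and j: "j < dim_col M"
  shows "in_right_span (dim_row M) (col_fn M) S (col_fn M j)"
proof (cases "j \<in> S")
  case True
  then show ?thesis using in_right_span_self right_indep_cols_finite[OF S(1)] by blast
next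
  case False
  have "finite S" using right_indep_cols_finite[OF S(1)] .
  show ?thesis
  proof (rule ccontr)
    assume "\<not> ?thesis"
    with False \<open>finite S\<close> S(1) have "right_independent (dim_row M) (col_fn M) (insert j S)"
      by (intro right_independent_insert) (auto simp: right_indep_cols_iff)
    with S(1) j have "right_indep_cols M (insert j S)"
      by (simp add: right_indep_cols_iff)
    from card_le_qmat_rank[OF this] show False using False \<open>finite S\<close> S(2) by simp
  qed
qed

lemma mult_mat_entry:
  assumes "A \<in> carrier_mat a b" "B \<in> carrier_mat b c" "i < a" "j < c"
  shows "(A * B) $$ (i, j) = (\<Sum>t<b. A $$ (i, t) * B $$ (t, j))"
  using assms by (simp add: scalar_prod_def atLeast0LessThan)

lemma col_mult_in_right_span:
  assumes P: "P \<in> carrier_mat a b" and Q: "Q \<in> carrier_mat b c" and j: "j < c"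
  shows "in_right_span a (col_fn P) {..<b} (col_fn (P * Q) j)"
  unfolding in_right_span_def
  by (intro exI[of _ "\<lambda>l. Q $$ (l, j)"]) (simp add: col_fn_def mult_mat_entry[OF P Q _ j])

lemma col_mult_in_right_span_basis:
  assumes P: "P \<in> carrier_mat a b" and Q: "Q \<in> carrier_mat b c" and j: "j < c"
    and S: "right_indep_cols P S" "card S = qmat_rank P"
  shows "in_right_span a (col_fn P) S (col_fn (P * Q) j)"
  using qmat_rank_basis_spans[OF S] P
  by (intro in_right_span_trans[OF finite_lessThan _ col_mult_in_right_span[OF P Q j]]) auto

lemma qmat_rank_mult_le:
  assumes P: "P \<in> carrier_mat a b" and Q: "Q \<in> carrier_mat b c"
  shows "qmat_rank (P * Q) \<le> qmat_rank P"
proof -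
  obtain T where T: "right_indep_cols (P * Q) T" "card T = qmat_rank (P * Q)"
    by (rule obtain_qmat_rank_basis)
  obtain S where S: "right_indep_cols P S" "card S = qmat_rank P"
    by (rule obtain_qmat_rank_basis)
  have "card T \<le> card S"
  proof (rule independent_card_le_spanning)
    show "right_independent a (col_fn (P * Q)) T"
      using T(1) P by (simp add: right_indep_cols_iff)
    have "T \<subseteq> {..<c}" using T(1) P Q by (simp add: right_indep_cols_def)
    then show "\<forall>j\<in>T. in_right_span a (col_fn P) S (col_fn (P * Q) j)"
      using col_mult_in_right_span_basis[OF P Q _ S] by blast
  qed (use S(1) T(1) right_indep_cols_finite in auto)
  then show ?thesis using S T by simp
qed

lemma qmat_rank_mult_eq_col_in_span:
  assumes P: "P \<in> carrier_mat N N" and Q: "Q \<in> carrier_mat N N"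
    and eq: "qmat_rank (P * Q) = qmat_rank P"
    and T: "right_indep_cols (P * Q) T" "card T = qmat_rank (P * Q)" and x: "x < N"
  shows "in_right_span N (col_fn (P * Q)) T (col_fn P x)"
  \<comment> \<open>Otherwise \<open>T\<close> plus column \<open>x\<close> of \<open>P\<close> would be \<open>rank P + 1\<close> independent vectors
    in the column span of \<open>P\<close>.\<close>
proof (rule ccontr)
  assume not_span: "\<not> ?thesis"
  obtain S where S: "right_indep_cols P S" "card S = qmat_rank P"
    by (rule obtain_qmat_rank_basis)
  have TN: "T \<subseteq> {..<N}" using T(1) Q by (simp add: right_indep_cols_def)
  have fin: "finite T" "finite S" using T(1) S(1) by (simp_all add: right_indep_cols_finite)
  define W where "W = (col_fn (P * Q))(N := col_fn P x)"
  have "N \<notin> T" using TN by auto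
  then have W_T: "j \<in> T \<Longrightarrow> W j = col_fn (P * Q) j" for j unfolding W_def by auto
  have "right_independent N W (insert N T)"
  proof (rule right_independent_insert[OF fin(1) \<open>N \<notin> T\<close>])
    show "right_independent N W T"
      using T(1) P right_independent_cong[of T W "col_fn (P * Q)" N] W_T
      by (simp add: right_indep_cols_iff)
    have "in_right_span N W T (W N) = in_right_span N (col_fn (P * Q)) T (W N)"
      unfolding in_right_span_def using W_T by (simp cong: sum.cong)
    then show "\<not> in_right_span N W T (W N)" using not_span unfolding W_def by simp
  qed
  moreover have "\<forall>j\<in>insert N T. in_right_span N (col_fn P) S (W j)"
  proof
    fix j assume "j \<in> insert N T"
    then consider "j = N" | "j \<in> T" "j < N" using TN by blast
    then show "in_right_span N (col_fn P) S (W j)"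
    proof cases
      case 1
      then show ?thesis using qmat_rank_basis_spans[OF S] P x by (simp add: W_def)
    next
      case 2
      then show ?thesis using col_mult_in_right_span_basis[OF P Q _ S] W_T by simp
    qed
  qed
  ultimately have "card (insert N T) \<le> card S"
    using fin by (intro independent_card_le_spanning) simp_all
  then show False using fin \<open>N \<notin> T\<close> T(2) S(2) eq by simp
qed

lemma qmat_rank_mult_eq_factor:
  assumes P: "P \<in> carrier_mat N N" and Q: "Q \<in> carrier_mat N N"
    and eq: "qmat_rank (P * Q) = qmat_rank P"
  obtains Z where "Z \<in> carrier_mat N N" "P = P * Q * Z"
proof -
  obtain T where T: "right_indep_cols (P * Q) T" "card T = qmat_rank (P * Q)"
    by (rule obtain_qmat_rank_basis)
  have PQ: "P * Q \<in> carrier_mat N N" using P Q by simp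
  have TN: "T \<subseteq> {..<N}" using T(1) Q by (simp add: right_indep_cols_def)
  have "\<forall>x\<in>{..<N}. \<exists>c. \<forall>r<N. P $$ (r, x) = (\<Sum>j\<in>T. (P * Q) $$ (r, j) * c j)"
    using qmat_rank_mult_eq_col_in_span[OF P Q eq T]
    unfolding in_right_span_def col_fn_def by simp
  from bchoice[OF this] obtain C
    where C: "\<forall>x\<in>{..<N}. \<forall>r<N. P $$ (r, x) = (\<Sum>j\<in>T. (P * Q) $$ (r, j) * C x j)" ..
  define Z where "Z = mat N N (\<lambda>(j, x). if j \<in> T then C x j else 0)"
  have Z: "Z \<in> carrier_mat N N" unfolding Z_def by simp
  have "P = P * Q * Z"
  proof (rule eq_matI)
    fix r x assume "r < dim_row (P * Q * Z)" "x < dim_col (P * Q * Z)"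
    then have r: "r < N" and x: "x < N" using P Z by simp_all
    have "(P * Q * Z) $$ (r, x) = (\<Sum>j<N. (P * Q) $$ (r, j) * Z $$ (j, x))"
      by (rule mult_mat_entry[OF PQ Z r x])
    also have "\<dots> = (\<Sum>j\<in>T. (P * Q) $$ (r, j) * C x j)"
      using TN x unfolding Z_def by (intro sum.mono_neutral_cong_right) auto
    finally show "P $$ (r, x) = (P * Q * Z) $$ (r, x)" using C r x by simp
  qed (use P PQ Z in simp_all)
  with Z show thesis by (rule that)
qed

section \<open>Drazin inverses\<close>

context monoid
begin

definition is_drazin_inverse :: "'a \<Rightarrow> nat \<Rightarrow> 'a \<Rightarrow> bool" where
  "is_drazin_inverse a m x \<longleftrightarrow> a \<otimes> x = x \<otimes> a \<and> x \<otimes> a \<otimes> x = x \<and> a [^] m \<otimes> x \<otimes> a = a [^] m"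

lemma pow_commute_pow:
  assumes "a \<in> carrier G" "x \<in> carrier G" "a \<otimes> x = x \<otimes> a"
  shows "a [^] (i::nat) \<otimes> x [^] (j::nat) = x [^] j \<otimes> a [^] i"
  using assms group_commutes_pow[of a "x [^] j"] group_commutes_pow[of x a j] by auto

lemma inner_inverse_pow_Suc_mult_pow:
  assumes a: "a \<in> carrier G" and x: "x \<in> carrier G"
    and ax: "a \<otimes> x = x \<otimes> a" and xax: "x \<otimes> a \<otimes> x = x"
  shows "x [^] Suc j \<otimes> a [^] j = x"
proof (induction j)
  case 0
  then show ?case using x by simp
next
  case (Suc j)
  have "x [^] Suc (Suc j) \<otimes> a [^] Suc j = x [^] Suc j \<otimes> (x \<otimes> a [^] j) \<otimes> a"
    using a x by (simp add: m_assoc)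
  also have "\<dots> = x [^] Suc j \<otimes> (a [^] j \<otimes> x) \<otimes> a"
    using group_commutes_pow[OF ax a x, of j] by simp
  also have "\<dots> = (x [^] Suc j \<otimes> a [^] j) \<otimes> (x \<otimes> a)"
    using a x by (simp add: m_assoc)
  also have "\<dots> = x \<otimes> (a \<otimes> x)" using Suc a x by (simp add: ax)
  also have "\<dots> = x" using xax a x by (simp add: m_assoc)
  finally show ?case .
qed

lemma drazin_inverse_unique:
  assumes a: "a \<in> carrier G" and x: "x \<in> carrier G" and y: "y \<in> carrier G"
    and "is_drazin_inverse a m x" "is_drazin_inverse a m y"
  shows "x = y"
proof -
  have ax: "a \<otimes> x = x \<otimes> a" and xax: "x \<otimes> a \<otimes> x = x" and mx: "a [^] m \<otimes> x \<otimes> a = a [^] m"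
    and ay: "a \<otimes> y = y \<otimes> a" and yay: "y \<otimes> a \<otimes> y = y" and my: "a [^] m \<otimes> y \<otimes> a = a [^] m"
    using assms(4,5) unfolding is_drazin_inverse_def by auto
  have "x = x [^] Suc m \<otimes> a [^] m"
    using inner_inverse_pow_Suc_mult_pow[OF a x ax xax] by simp
  also have "\<dots> = x [^] Suc m \<otimes> (a [^] m \<otimes> y \<otimes> a)" using my by simp
  also have "\<dots> = (x [^] Suc m \<otimes> a [^] m) \<otimes> (a \<otimes> y)"
    using a x y by (simp add: m_assoc ay)
  also have "\<dots> = x \<otimes> a \<otimes> y"
    using inner_inverse_pow_Suc_mult_pow[OF a x ax xax] a x y by (simp add: m_assoc)
  finally have x_eq: "x = x \<otimes> a \<otimes> y" .
  have y_eq: "a [^] m \<otimes> y [^] Suc m = y"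
    using inner_inverse_pow_Suc_mult_pow[OF a y ay yay, of m] pow_commute_pow[OF a y ay]
    by metis
  have "y = a [^] m \<otimes> y [^] Suc m" using y_eq by simp
  also have "\<dots> = (a [^] m \<otimes> x \<otimes> a) \<otimes> y [^] Suc m" using mx by simp
  also have "\<dots> = x \<otimes> a \<otimes> (a [^] m \<otimes> y [^] Suc m)"
    using a x y group_commutes_pow[OF ax a x, of m] nat_pow_Suc2[OF a, of m]
    by (simp add: m_assoc)
  also note y_eq
  finally show ?thesis using x_eq by simp
qed

lemma drazin_inverse_pow_eq:
  assumes "a \<in> carrier G" "x \<in> carrier G" "is_drazin_inverse a k x"
  shows "a [^] k = a [^] Suc k \<otimes> x"
  using assms unfolding is_drazin_inverse_def by (simp add: m_assoc)

lemma drazin_inverse_lower: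
  assumes a: "a \<in> carrier G" and x: "x \<in> carrier G" and z: "z \<in> carrier G"
    and dr: "is_drazin_inverse a k x"
    and mz: "a [^] m = a [^] Suc m \<otimes> z" and "m \<le> k"
  shows "is_drazin_inverse a m x"
proof -
  have ax: "a \<otimes> x = x \<otimes> a" and kx: "a [^] k \<otimes> x \<otimes> a = a [^] k"
    using dr unfolding is_drazin_inverse_def by auto
  have "\<exists>w\<in>carrier G. a [^] m = a [^] (m + j) \<otimes> w" for j
  proof (induction j)
    case 0
    then show ?case using a by (intro bexI[of _ \<one>]) auto
  next
    case (Suc j)
    then obtain w where w: "w \<in> carrier G" "a [^] m = a [^] (m + j) \<otimes> w" by blast
    have "a [^] m = a [^] j \<otimes> a [^] m \<otimes> w"
      using w(2) nat_pow_mult[OF a, of j m] by (simp add: add.commute)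
    also have "\<dots> = a [^] j \<otimes> a [^] Suc m \<otimes> (z \<otimes> w)"
      using a z w by (subst mz) (simp add: m_assoc)
    also have "\<dots> = a [^] (m + Suc j) \<otimes> (z \<otimes> w)"
      using add.commute[of j "Suc m"] by (simp only: nat_pow_mult[OF a] add_Suc_shift)
    finally show ?case using z w by blast
  qed
  from this[of "k - m"] \<open>m \<le> k\<close> obtain w where w: "w \<in> carrier G" "a [^] m = a [^] k \<otimes> w"
    by auto
  have xa_comm: "a \<otimes> (x \<otimes> a) = (x \<otimes> a) \<otimes> a" using a x by (simp add: ax m_assoc[symmetric])
  have "a [^] m \<otimes> x \<otimes> a = (x \<otimes> a) \<otimes> a [^] k \<otimes> w"
    using group_commutes_pow[OF xa_comm a, of m] a x w by (simp add: m_assoc)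
  also have "(x \<otimes> a) \<otimes> a [^] k = a [^] k \<otimes> x \<otimes> a"
    using group_commutes_pow[OF xa_comm a, of k] a x by (simp add: m_assoc)
  finally show ?thesis using dr kx w unfolding is_drazin_inverse_def by simp
qed

end

lemma is_drazin_inverse_ring_mat_iff:
  fixes M X :: "'a::semiring_1 mat"
  assumes "M \<in> carrier_mat N N"
  shows "monoid.is_drazin_inverse (ring_mat TYPE('a) N b) M m X \<longleftrightarrow>
    M * X = X * M \<and> X * M * X = X \<and> M ^\<^sub>m m * X * M = M ^\<^sub>m m"
  by (simp add: monoid.is_drazin_inverse_def[OF semiring.axioms(2)[OF semiring_mat]]
      ring_mat_simps pow_mat_ring_pow[OF assms, symmetric])

lemma qmat_rank_pow_Suc_eq:
  fixes M Y :: "quat mat"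
  assumes M: "M \<in> carrier_mat N N" and Y: "Y \<in> carrier_mat N N"
    and pow_eq: "M ^\<^sub>m k = M ^\<^sub>m Suc k * Y"
  shows "qmat_rank (M ^\<^sub>m Suc k) = qmat_rank (M ^\<^sub>m k)"
proof (rule antisym)
  have pow_carrier: "M ^\<^sub>m j \<in> carrier_mat N N" for j using M by simp
  show "qmat_rank (M ^\<^sub>m Suc k) \<le> qmat_rank (M ^\<^sub>m k)"
    using qmat_rank_mult_le[OF pow_carrier M] by simp
  have "qmat_rank (M ^\<^sub>m Suc k * Y) \<le> qmat_rank (M ^\<^sub>m Suc k)"
    using qmat_rank_mult_le[OF pow_carrier Y] .
  then show "qmat_rank (M ^\<^sub>m k) \<le> qmat_rank (M ^\<^sub>m Suc k)" by (simp only: pow_eq[symmetric])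
qed

lemma qmat_ind_le_and_pow_factor:
  fixes M Y :: "quat mat"
  assumes M: "M \<in> carrier_mat N N" and Y: "Y \<in> carrier_mat N N"
    and pow_eq: "M ^\<^sub>m k = M ^\<^sub>m Suc k * Y"
  obtains Z where "qmat_ind M \<le> k" "Z \<in> carrier_mat N N"
    "M ^\<^sub>m qmat_ind M = M ^\<^sub>m Suc (qmat_ind M) * Z"
proof -
  let ?stable = "\<lambda>j. qmat_rank (M ^\<^sub>m (j + 1)) = qmat_rank (M ^\<^sub>m j)"
  have "?stable k" using qmat_rank_pow_Suc_eq[OF M Y pow_eq] by simp
  then have "qmat_ind M \<le> k" and "?stable (qmat_ind M)"
    unfolding qmat_ind_def by (auto intro: Least_le LeastI)
  moreover have "M ^\<^sub>m qmat_ind M \<in> carrier_mat N N" using M by simp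
  ultimately show thesis
    using qmat_rank_mult_eq_factor[of "M ^\<^sub>m qmat_ind M" N M] M that by auto
qed

lemma qmat_drazin_eq_at_ind:
  fixes M Y :: "quat mat"
  assumes M: "M \<in> carrier_mat N N" and Y: "Y \<in> carrier_mat N N"
    and Y_drazin: "monoid.is_drazin_inverse (ring_mat TYPE(quat) N ()) M (qmat_ind M) Y"
  shows "qmat_drazin M = Y"
proof -
  interpret R: semiring "ring_mat TYPE(quat) N ()" by (rule semiring_mat)
  have dim: "dim_row M = N" using M by simp
  show ?thesis
    unfolding qmat_drazin_def dim
  proof (rule the_equality)
    show "Y \<in> carrier_mat N N \<and> M ^\<^sub>m qmat_ind M * Y * M = M ^\<^sub>m qmat_ind M \<and>
        Y * M * Y = Y \<and> M * Y = Y * M"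
      using Y Y_drazin by (simp add: is_drazin_inverse_ring_mat_iff[OF M])
  next
    fix X assume X: "X \<in> carrier_mat N N \<and> M ^\<^sub>m qmat_ind M * X * M = M ^\<^sub>m qmat_ind M \<and>
        X * M * X = X \<and> M * X = X * M"
    then have "R.is_drazin_inverse M (qmat_ind M) X"
      by (simp add: is_drazin_inverse_ring_mat_iff[OF M])
    moreover have "M \<in> carrier (ring_mat TYPE(quat) N ())" "X \<in> carrier (ring_mat TYPE(quat) N ())"
      "Y \<in> carrier (ring_mat TYPE(quat) N ())"
      using M X Y by (simp_all add: ring_mat_simps)
    ultimately show "X = Y" using R.drazin_inverse_unique Y_drazin by blast
  qed
qed

lemma qmat_drazin_eqI:
  fixes M Y :: "quat mat"
  assumes M: "M \<in> carrier_mat N N" and Y: "Y \<in> carrier_mat N N"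
    and "M * Y = Y * M" "Y * M * Y = Y" "M ^\<^sub>m k * Y * M = M ^\<^sub>m k"
  shows "qmat_drazin M = Y"
proof -
  let ?R = "ring_mat TYPE(quat) N ()"
  interpret R: semiring ?R by (rule semiring_mat)
  have in_R: "M \<in> carrier ?R" "Y \<in> carrier ?R"
    using M Y by (simp_all add: ring_mat_simps)
  have Y_k: "R.is_drazin_inverse M k Y"
    using assms by (simp add: is_drazin_inverse_ring_mat_iff[OF M])
  have "M ^\<^sub>m k = M ^\<^sub>m Suc k * Y"
    using R.drazin_inverse_pow_eq[OF in_R Y_k]
    by (simp add: ring_mat_simps pow_mat_ring_pow[OF M, symmetric])
  then obtain Z where "qmat_ind M \<le> k" "Z \<in> carrier_mat N N"
    "M ^\<^sub>m qmat_ind M = M ^\<^sub>m Suc (qmat_ind M) * Z"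
    by (rule qmat_ind_le_and_pow_factor[OF M Y])
  then have "R.is_drazin_inverse M (qmat_ind M) Y"
    using R.drazin_inverse_lower[OF in_R _ Y_k, of Z "qmat_ind M"]
    by (simp add: ring_mat_simps pow_mat_ring_pow[OF M, symmetric])
  then show ?thesis by (rule qmat_drazin_eq_at_ind[OF M Y])
qed

section \<open>The block circulant embedding\<close>

(* q = qpart_d q + qpart_jc q is the paper's splitting q = q_d + j q_c. *)

definition qpart_d :: "quat \<Rightarrow> quat" where
  "qpart_d q = Quat (qre q) (qi q) 0 0"

definition qpart_jc :: "quat \<Rightarrow> quat" where
  "qpart_jc q = Quat 0 0 (qj q) (qk q)"

lemma qpart_d_mult: "qpart_d (x * y) = qpart_d x * qpart_d y + qpart_jc x * qpart_jc y"
  by (simp add: quat_eq_iff qpart_d_def qpart_jc_def plus_quat_def times_quat_def)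

lemma qpart_jc_mult: "qpart_jc (x * y) = qpart_d x * qpart_jc y + qpart_jc x * qpart_d y"
  by (simp add: quat_eq_iff qpart_d_def qpart_jc_def plus_quat_def times_quat_def)

lemma qpart_d_add: "qpart_d (x + y) = qpart_d x + qpart_d y"
  by (simp add: quat_eq_iff qpart_d_def plus_quat_def)

lemma qpart_jc_add: "qpart_jc (x + y) = qpart_jc x + qpart_jc y"
  by (simp add: quat_eq_iff qpart_jc_def plus_quat_def)

lemma qpart_simps [simp]:
  "qpart_d 0 = 0" "qpart_jc 0 = 0" "qpart_d 1 = 1" "qpart_jc 1 = 0"
  "qpart_d (qpart_d x) = qpart_d x" "qpart_jc (qpart_jc x) = qpart_jc x"
  "qpart_d (qpart_jc x) = 0" "qpart_jc (qpart_d x) = 0"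
  by (simp_all add: qpart_d_def qpart_jc_def zero_quat_def one_quat_def)

lemma qpart_d_sum: "qpart_d (sum f A) = (\<Sum>x\<in>A. qpart_d (f x))"
  by (induction A rule: infinite_finite_induct) (auto simp: qpart_d_add)

lemma qpart_jc_sum: "qpart_jc (sum f A) = (\<Sum>x\<in>A. qpart_jc (f x))"
  by (induction A rule: infinite_finite_induct) (auto simp: qpart_jc_add)

lemma qpart_d_graded_mult:
  "qpart_d ((qpart_d x + qpart_jc y) * z) = qpart_d x * qpart_d z + qpart_jc y * qpart_jc z"
  by (simp add: qpart_d_mult qpart_d_add qpart_jc_add)

lemma qpart_jc_graded_mult:
  "qpart_jc ((qpart_d x + qpart_jc y) * z) = qpart_d x * qpart_jc z + qpart_jc y * qpart_d z"
  by (simp add: qpart_jc_mult qpart_d_add qpart_jc_add)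

lemma block_index_less:
  fixes u e n n3 :: nat
  assumes "u < n3" "e < n"
  shows "u * n + e < n * n3"
proof -
  have "u * n + e < Suc u * n" using assms(2) by simp
  also have "\<dots> \<le> n3 * n" using assms(1) by (intro mult_le_mono1) simp
  also have "\<dots> = n * n3" by simp
  finally show ?thesis .
qed

lemma sum_lessThan_mult_blocks:
  fixes f :: "nat \<Rightarrow> 'a::comm_monoid_add"
  shows "(\<Sum>t<n * n3. f t) = (\<Sum>u<n3. \<Sum>e<n. f (u * n + e))"
proof -
  have "(\<Sum>t<n * n3. f t) = (\<Sum>u<n3. sum f {u * n..<u * n + n})"
    using sum.nat_group[of f n n3] by (simp add: mult.commute)
  also have "\<dots> = (\<Sum>u<n3. \<Sum>e<n. f (u * n + e))"
    using sum.shift_bounds_nat_ivl[of f 0 "u * n" n for u]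
    by (simp add: atLeast0LessThan add.commute)
  finally show ?thesis .
qed

lemma sum_periodic_shift:
  fixes F :: "int \<Rightarrow> 'a::comm_monoid_add" and n3 :: nat
  assumes per: "\<And>z. F (z mod int n3) = F z" and "n3 > 0"
  shows "(\<Sum>u<n3. F (int u + c)) = (\<Sum>u<n3. F (int u))"
proof -
  define h where "h u = nat ((int u + c) mod int n3)" for u
  have F_h: "F (int (h u)) = F (int u + c)" for u
    unfolding h_def using \<open>n3 > 0\<close> per by simp
  have "inj_on h {..<n3}"
  proof
    fix x y assume "x \<in> {..<n3}" "y \<in> {..<n3}" "h x = h y"
    then have "(int x + c) mod int n3 = (int y + c) mod int n3"
      unfolding h_def using \<open>n3 > 0\<close> by (simp add: eq_nat_nat_iff)
    then have "int x mod int n3 = int y mod int n3"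
      by (metis add_diff_cancel_right' mod_diff_left_eq)
    with \<open>x \<in> {..<n3}\<close> \<open>y \<in> {..<n3}\<close> show "x = y" by simp
  qed
  moreover have "h ` {..<n3} \<subseteq> {..<n3}"
    unfolding h_def using \<open>n3 > 0\<close> by (auto simp: nat_less_iff)
  ultimately have "h ` {..<n3} = {..<n3}"
    by (simp add: endo_inj_surj)
  then have "(\<Sum>u<n3. F (int u)) = (\<Sum>u<n3. F (int (h u)))"
    using sum.reindex[OF \<open>inj_on h {..<n3}\<close>, of "\<lambda>w. F (int w)"] by simp
  then show ?thesis by (simp add: F_h)
qed

lemma reflect_mod_eq_iff:
  fixes p q n3 :: nat
  assumes "p < n3" "q < n3"
  shows "q = (n3 - p) mod n3 \<longleftrightarrow> p = (n3 - q) mod n3"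
  using assms by (cases "p = 0"; cases "q = 0") auto

lemma reflect_mod_diff:
  fixes p q n3 :: nat
  assumes "q < n3"
  shows "nat ((int p - int ((n3 - q) mod n3)) mod int n3) = (p + q) mod n3"
proof (cases "q = 0")
  case True
  then show ?thesis by (simp add: nat_mod_as_int)
next
  case False
  with assms have "(n3 - q) mod n3 = n3 - q" by simp
  moreover have "(int p - int (n3 - q)) mod int n3 = int (p + q) mod int n3"
    using assms by (simp add: of_nat_diff algebra_simps flip: mod_diff_right_eq)
  ultimately show ?thesis by (simp add: nat_mod_as_int)
qed

lemma kron_I_perm_P_entry:
  assumes t: "t < n * n3" and c: "c < n * n3"
  shows "kron_I (perm_P n3) n $$ (t, c) =
    (if t = ((n3 - c div n) mod n3) * n + c mod n then 1 else 0)"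
proof -
  have "n > 0" using t by (cases n) auto
  have td: "t div n < n3" and cd: "c div n < n3"
    using t c less_mult_imp_div_less[of _ n3 n] by (simp_all add: mult.commute)
  have "kron_I (perm_P n3) n $$ (t, c) =
     (if t mod n = c mod n \<and> c div n = (n3 - t div n) mod n3 then 1 else 0)"
    unfolding kron_I_def perm_P_def using t c td cd by (simp add: mult.commute)
  also have "(t mod n = c mod n \<and> c div n = (n3 - t div n) mod n3) \<longleftrightarrow>
      t = ((n3 - c div n) mod n3) * n + c mod n"
  proof
    assume "t mod n = c mod n \<and> c div n = (n3 - t div n) mod n3"
    then show "t = ((n3 - c div n) mod n3) * n + c mod n"
      using reflect_mod_eq_iff[OF td cd] div_mult_mod_eq[of t n] by simp
  next
    assume "t = ((n3 - c div n) mod n3) * n + c mod n"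
    then show "t mod n = c mod n \<and> c div n = (n3 - t div n) mod n3"
      using reflect_mod_eq_iff[OF td cd] \<open>n > 0\<close> by simp
  qed
  finally show ?thesis .
qed

lemma bcirc_entry:
  assumes "r < n1 * n3" "c < n2 * n3"
  shows "bcirc n1 n2 n3 C $$ (r, c) =
    C (r mod n1) (c mod n2) (nat ((int (r div n1) - int (c div n2)) mod int n3))"
  using assms unfolding bcirc_def by simp

lemma bcirc_carrier: "bcirc n1 n2 n3 C \<in> carrier_mat (n1 * n3) (n2 * n3)"
  unfolding bcirc_def by simp

lemma kron_I_perm_P_carrier: "kron_I (perm_P n3) n \<in> carrier_mat (n * n3) (n * n3)"
  unfolding kron_I_def perm_P_def by (simp add: mult.commute)

lemma bcirc_z_carrier: "bcirc_z n1 n2 n3 A \<in> carrier_mat (n1 * n3) (n2 * n3)"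
  using bcirc_carrier kron_I_perm_P_carrier unfolding bcirc_z_def by fastforce

(* The permutation P_n3 (x) I turns the block index p - q of the j-part into p + q. *)

lemma bcirc_z_entry:
  assumes r: "r < n1 * n3" and c: "c < n2 * n3"
  shows "bcirc_z n1 n2 n3 A $$ (r, c) =
     qpart_d (A (r mod n1) (c mod n2) (nat ((int (r div n1) - int (c div n2)) mod int n3))) +
     qpart_jc (A (r mod n1) (c mod n2) ((r div n1 + c div n2) mod n3))"
proof -
  have "n2 > 0" using c by (cases n2) auto
  have cd: "c div n2 < n3" using c less_mult_imp_div_less[of c n3 n2] by (simp add: mult.commute)
  define t0 where "t0 = ((n3 - c div n2) mod n3) * n2 + c mod n2"
  have t0: "t0 < n2 * n3"
    unfolding t0_def using cd \<open>n2 > 0\<close> by (intro block_index_less) simp_all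
  have t0_div: "t0 div n2 = (n3 - c div n2) mod n3" and t0_mod: "t0 mod n2 = c mod n2"
    unfolding t0_def using \<open>n2 > 0\<close> by simp_all
  define Cc where "Cc = cpx_tensor (tpart_c A)"
  define K where "K = (kron_I (perm_P n3) n2 :: quat mat)"
  have "(bcirc n1 n2 n3 Cc * K) $$ (r, c) = (\<Sum>t<n2 * n3. bcirc n1 n2 n3 Cc $$ (r, t) * K $$ (t, c))"
    using r c bcirc_carrier kron_I_perm_P_carrier unfolding K_def by (intro mult_mat_entry)
  also have "\<dots> = (\<Sum>t<n2 * n3. if t = t0 then bcirc n1 n2 n3 Cc $$ (r, t) else 0)"
    using c by (intro sum.cong) (simp_all add: K_def kron_I_perm_P_entry t0_def)
  also have "\<dots> = Cc (r mod n1) (c mod n2) ((r div n1 + c div n2) mod n3)"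
    using r t0 cd by (simp add: bcirc_entry t0_div t0_mod reflect_mod_diff)
  finally have j_block: "(bcirc n1 n2 n3 Cc * K) $$ (r, c) = Cc (r mod n1) (c mod n2) ((r div n1 + c div n2) mod n3)" .
  have "quat_j * Cc a b s = qpart_jc (A a b s)" for a b s
    unfolding Cc_def cpx_tensor_def tpart_c_def of_cpx_def quat_j_def qpart_jc_def
    by (simp add: quat_eq_iff times_quat_def)
  moreover have "cpx_tensor (tpart_d A) a b s = qpart_d (A a b s)" for a b s
    unfolding cpx_tensor_def tpart_d_def of_cpx_def qpart_d_def by simp
  moreover have "bcirc_z n1 n2 n3 A $$ (r, c) =
      bcirc n1 n2 n3 (cpx_tensor (tpart_d A)) $$ (r, c) + quat_j * (bcirc n1 n2 n3 Cc * K) $$ (r, c)"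
  proof -
    have BK: "bcirc n1 n2 n3 Cc * K \<in> carrier_mat (n1 * n3) (n2 * n3)"
      using bcirc_carrier kron_I_perm_P_carrier unfolding K_def by (rule mult_carrier_mat)
    show ?thesis
      unfolding bcirc_z_def Cc_def[symmetric] K_def[symmetric]
      using r c carrier_matD[OF BK] carrier_matD[OF bcirc_carrier[of n1 n2 n3]] by simp
  qed
  ultimately show ?thesis using r c by (simp add: j_block bcirc_entry)
qed

definition tentry_mod :: "nat \<Rightarrow> 'a tensor \<Rightarrow> nat \<Rightarrow> nat \<Rightarrow> int \<Rightarrow> 'a" where
  "tentry_mod n3 A i j z = A i j (nat (z mod int n3))"

lemma tentry_mod_of_nat [simp]: "s < n3 \<Longrightarrow> tentry_mod n3 A i j (int s) = A i j s"
  unfolding tentry_mod_def by simp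

lemma tentry_mod_mod [simp]:
  "tentry_mod n3 A i j (z mod int n3) = tentry_mod n3 A i j z"
  "tentry_mod n3 A i j (x - z mod int n3) = tentry_mod n3 A i j (x - z)"
  "tentry_mod n3 A i j (x + z mod int n3) = tentry_mod n3 A i j (x + z)"
  "tentry_mod n3 A i j (z mod int n3 - x) = tentry_mod n3 A i j (z - x)"
  "tentry_mod n3 A i j (z mod int n3 + x) = tentry_mod n3 A i j (z + x)"
  unfolding tentry_mod_def
  by (simp_all add: mod_diff_right_eq mod_add_right_eq mod_diff_left_eq mod_add_left_eq)

lemma bcirc_z_entry_mod:
  assumes "r < n1 * n3" "c < n2 * n3"
  shows "bcirc_z n1 n2 n3 A $$ (r, c) =
     qpart_d (tentry_mod n3 A (r mod n1) (c mod n2) (int (r div n1) - int (c div n2))) +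
     qpart_jc (tentry_mod n3 A (r mod n1) (c mod n2) (int (r div n1) + int (c div n2)))"
  unfolding bcirc_z_entry[OF assms] tentry_mod_def by (simp add: nat_mod_as_int)

lemma qt_prod_entry_mod:
  assumes "n3 > 0" "i < n1" "j < n4"
  shows "tentry_mod n3 (qt_prod n1 n2 n4 n3 A B) i j z =
    (\<Sum>u<n3. \<Sum>e<n2. (qpart_d (tentry_mod n3 A i e (z - int u)) +
                       qpart_jc (tentry_mod n3 A i e (z + int u))) * B e j u)"
proof -
  define s where "s = nat (z mod int n3)"
  have s: "s < n3" and zs: "int s = z mod int n3"
    unfolding s_def using \<open>n3 > 0\<close> by (simp_all add: nat_less_iff)
  have r: "s * n1 + i < n1 * n3" using block_index_less[OF s \<open>i < n1\<close>] .
  have "tentry_mod n3 (qt_prod n1 n2 n4 n3 A B) i j z =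
      (bcirc_z n1 n2 n3 A * tunfold n2 n4 n3 B) $$ (s * n1 + i, j)"
    unfolding tentry_mod_def qt_prod_def tfold_def s_def[symmetric] using assms s by simp
  also have "\<dots> = (\<Sum>t<n2 * n3. bcirc_z n1 n2 n3 A $$ (s * n1 + i, t) * tunfold n2 n4 n3 B $$ (t, j))"
    using bcirc_z_carrier r \<open>j < n4\<close> by (intro mult_mat_entry) (auto simp: tunfold_def)
  also have "\<dots> = (\<Sum>u<n3. \<Sum>e<n2. (qpart_d (tentry_mod n3 A i e (int s - int u)) +
        qpart_jc (tentry_mod n3 A i e (int s + int u))) * B e j u)"
    unfolding sum_lessThan_mult_blocks
    using r \<open>i < n1\<close> \<open>j < n4\<close> block_index_less[of _ n3 _ n2]
    by (intro sum.cong refl) (simp add: bcirc_z_entry_mod tunfold_def)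
  finally show ?thesis
    unfolding zs by simp
qed

lemma qpart_d_qt_prod:
  assumes "n3 > 0" "i < n1" "j < n4"
  shows "qpart_d (tentry_mod n3 (qt_prod n1 n2 n4 n3 A B) i j z) =
    (\<Sum>u<n3. \<Sum>e<n2. qpart_d (tentry_mod n3 A i e (z - int u)) * qpart_d (B e j u) +
                     qpart_jc (tentry_mod n3 A i e (z + int u)) * qpart_jc (B e j u))"
  unfolding qt_prod_entry_mod[OF assms] by (simp add: qpart_d_sum qpart_d_graded_mult)

lemma qpart_jc_qt_prod:
  assumes "n3 > 0" "i < n1" "j < n4"
  shows "qpart_jc (tentry_mod n3 (qt_prod n1 n2 n4 n3 A B) i j z) =
    (\<Sum>u<n3. \<Sum>e<n2. qpart_d (tentry_mod n3 A i e (z - int u)) * qpart_jc (B e j u) +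
                     qpart_jc (tentry_mod n3 A i e (z + int u)) * qpart_d (B e j u))"
  unfolding qt_prod_entry_mod[OF assms] by (simp add: qpart_jc_sum qpart_jc_graded_mult)

lemma bcirc_z_mult_entry:
  assumes "n3 > 0" and r: "r < n1 * n3" and c: "c < n4 * n3"
  defines "a \<equiv> r mod n1" and "b \<equiv> c mod n4" and "P \<equiv> int (r div n1)" and "Q \<equiv> int (c div n4)"
  shows "(bcirc_z n1 n2 n3 A * bcirc_z n2 n4 n3 B) $$ (r, c) =
    (\<Sum>u<n3. \<Sum>e<n2. qpart_d (tentry_mod n3 A a e (P - Q - int u)) * qpart_d (B e b u) +
                     qpart_jc (tentry_mod n3 A a e (P - Q + int u)) * qpart_jc (B e b u)) +
    (\<Sum>u<n3. \<Sum>e<n2. qpart_d (tentry_mod n3 A a e (P + Q - int u)) * qpart_jc (B e b u) +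
                     qpart_jc (tentry_mod n3 A a e (P + Q + int u)) * qpart_d (B e b u))"
proof -
  let ?A = "tentry_mod n3 A a" and ?B = "\<lambda>e. tentry_mod n3 B e b"
  define G1 where "G1 v = (\<Sum>e<n2. qpart_d (?A e (P - Q - v)) * qpart_d (?B e v))" for v
  define G2 where "G2 v = (\<Sum>e<n2. qpart_d (?A e (P + Q - v)) * qpart_jc (?B e v))" for v
  define G3 where "G3 v = (\<Sum>e<n2. qpart_jc (?A e (P + Q + v)) * qpart_d (?B e v))" for v
  define G4 where "G4 v = (\<Sum>e<n2. qpart_jc (?A e (P - Q + v)) * qpart_jc (?B e v))" for v
  have periodic: "G (z mod int n3) = G z" if "G \<in> {G1, G2, G3, G4}" for G z
    using that unfolding G1_def G2_def G3_def G4_def by auto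
  have shift: "(\<Sum>u<n3. G (int u + d)) = (\<Sum>u<n3. G (int u))" if "G \<in> {G1, G2, G3, G4}" for G d
    using periodic[OF that] \<open>n3 > 0\<close> by (rule sum_periodic_shift)
  have "(bcirc_z n1 n2 n3 A * bcirc_z n2 n4 n3 B) $$ (r, c) =
      (\<Sum>u<n3. \<Sum>e<n2. bcirc_z n1 n2 n3 A $$ (r, u * n2 + e) * bcirc_z n2 n4 n3 B $$ (u * n2 + e, c))"
    by (simp add: mult_mat_entry[OF bcirc_z_carrier bcirc_z_carrier r c] sum_lessThan_mult_blocks)
  \<comment> \<open>each of the four products of graded parts is a shifted copy of one \<open>G\<close>\<close>
  also have "\<dots> = (\<Sum>u<n3. G1 (int u - Q) + G2 (int u + Q) + G3 (int u - Q) + G4 (int u + Q))"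
  proof (intro sum.cong refl)
    fix u assume "u \<in> {..<n3}"
    then have "(\<Sum>e<n2. bcirc_z n1 n2 n3 A $$ (r, u * n2 + e) * bcirc_z n2 n4 n3 B $$ (u * n2 + e, c)) =
      (\<Sum>e<n2. (qpart_d (?A e (P - int u)) + qpart_jc (?A e (P + int u))) *
               (qpart_d (?B e (int u - Q)) + qpart_jc (?B e (int u + Q))))"
      using r c block_index_less[of u n3 _ n2]
      by (intro sum.cong refl) (simp add: bcirc_z_entry_mod a_def b_def P_def Q_def)
    also have "\<dots> = G1 (int u - Q) + G2 (int u + Q) + G3 (int u - Q) + G4 (int u + Q)"
      unfolding G1_def G2_def G3_def G4_def
      by (simp add: distrib_left distrib_right sum.distrib add_ac)
    finally show "(\<Sum>e<n2. bcirc_z n1 n2 n3 A $$ (r, u * n2 + e) * bcirc_z n2 n4 n3 B $$ (u * n2 + e, c)) =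
      G1 (int u - Q) + G2 (int u + Q) + G3 (int u - Q) + G4 (int u + Q)" .
  qed
  also have "\<dots> = (\<Sum>u<n3. G1 (int u) + G4 (int u)) + (\<Sum>u<n3. G2 (int u) + G3 (int u))"
    using shift[of G1 "- Q"] shift[of G2 Q] shift[of G3 "- Q"] shift[of G4 Q]
    by (simp add: sum.distrib add_ac)
  finally show ?thesis
    unfolding G1_def G2_def G3_def G4_def by (simp add: sum.distrib)
qed

lemma bcirc_z_qt_prod:
  "bcirc_z n1 n4 n3 (qt_prod n1 n2 n4 n3 A B) = bcirc_z n1 n2 n3 A * bcirc_z n2 n4 n3 B"
proof (rule eq_matI)
  fix r c assume "r < dim_row (bcirc_z n1 n2 n3 A * bcirc_z n2 n4 n3 B)"
    and "c < dim_col (bcirc_z n1 n2 n3 A * bcirc_z n2 n4 n3 B)"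
  then have r: "r < n1 * n3" and c: "c < n4 * n3"
    using bcirc_z_carrier[of n1 n2 n3 A] bcirc_z_carrier[of n2 n4 n3 B] by auto
  have "n1 * n3 > 0" using r by linarith
  moreover have "n4 * n3 > 0" using c by linarith
  ultimately have "n3 > 0" "r mod n1 < n1" "c mod n4 < n4" by simp_all
  then show "bcirc_z n1 n4 n3 (qt_prod n1 n2 n4 n3 A B) $$ (r, c) =
      (bcirc_z n1 n2 n3 A * bcirc_z n2 n4 n3 B) $$ (r, c)"
    by (simp add: bcirc_z_entry_mod[OF r c] bcirc_z_mult_entry[OF _ r c] qpart_d_qt_prod qpart_jc_qt_prod)
qed (use bcirc_z_carrier[of n1 n2 n3 A] bcirc_z_carrier[of n2 n4 n3 B] bcirc_z_carrier[of n1 n4 n3] in auto)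

lemma nat_mod_diff_eq_0_iff:
  fixes p q n3 :: nat
  assumes "p < n3" "q < n3"
  shows "nat ((int p - int q) mod int n3) = 0 \<longleftrightarrow> p = q"
proof -
  have "0 \<le> (int p - int q) mod int n3" using assms by simp
  then have "nat ((int p - int q) mod int n3) = 0 \<longleftrightarrow> int p mod int n3 = int q mod int n3"
    by (simp add: mod_eq_dvd_iff dvd_eq_mod_eq_0)
  with assms show ?thesis by simp
qed

lemma bcirc_z_qt_id: "bcirc_z n n n3 (qt_id n n3) = 1\<^sub>m (n * n3)"
proof (rule eq_matI)
  fix r c assume "r < dim_row (1\<^sub>m (n * n3) :: quat mat)" "c < dim_col (1\<^sub>m (n * n3) :: quat mat)"
  then have r: "r < n * n3" and c: "c < n * n3" by simp_all
  then have "n > 0" and rd: "r div n < n3" and cd: "c div n < n3"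
    using less_mult_imp_div_less[of _ n3 n] by (auto simp: mult.commute intro: Nat.gr0I)
  define s where "s = nat ((int (r div n) - int (c div n)) mod int n3)"
  have "s < n3" using rd unfolding s_def by (simp add: nat_less_iff)
  have "bcirc_z n n n3 (qt_id n n3) $$ (r, c) = qt_id n n3 (r mod n) (c mod n) s"
    unfolding bcirc_z_entry[OF r c] s_def[symmetric] by (simp add: qt_id_def)
  also have "\<dots> = (if r mod n = c mod n \<and> r div n = c div n then 1 else 0)"
    using \<open>n > 0\<close> \<open>s < n3\<close> nat_mod_diff_eq_0_iff[OF rd cd] by (simp add: qt_id_def s_def)
  also have "r mod n = c mod n \<and> r div n = c div n \<longleftrightarrow> r = c"
    by (metis div_mult_mod_eq)
  also have "(if r = c then 1 else 0) = 1\<^sub>m (n * n3) $$ (r, c)"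
    using r c by simp
  finally show "bcirc_z n n n3 (qt_id n n3) $$ (r, c) = 1\<^sub>m (n * n3) $$ (r, c)" .
qed (use bcirc_z_carrier[of n n n3] in auto)

lemma pow_mat_Suc_left:
  fixes M :: "'a::semiring_1 mat"
  assumes "M \<in> carrier_mat N N"
  shows "M ^\<^sub>m Suc k = M * M ^\<^sub>m k"
proof -
  interpret R: semiring "ring_mat TYPE('a) N ()" by (rule semiring_mat)
  have "M \<in> carrier (ring_mat TYPE('a) N ())" using assms by (simp add: ring_mat_simps)
  from R.nat_pow_Suc2[OF this, of k] show ?thesis
    by (simp add: pow_mat_ring_pow[OF assms, symmetric] ring_mat_simps)
qed

lemma bcirc_z_qt_pow: "bcirc_z n n n3 (qt_pow n n3 A k) = bcirc_z n n n3 A ^\<^sub>m k"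
proof (induction k)
  case 0
  then show ?case using bcirc_z_carrier[of n n n3 A] by (simp add: bcirc_z_qt_id)
next
  case (Suc k)
  then have "bcirc_z n n n3 (qt_pow n n3 A (Suc k)) = bcirc_z n n n3 A * bcirc_z n n n3 A ^\<^sub>m k"
    by (simp add: bcirc_z_qt_prod)
  then show ?case by (simp only: pow_mat_Suc_left[OF bcirc_z_carrier])
qed

theorem lemma3p5:
  fixes A X :: "quat tensor" and n n3 k :: nat
  assumes "A \<in> tensor_carrier n n n3"
    and "X \<in> tensor_carrier n n n3"
    and "qt_ind n n3 A = k"
    and "is_qt_drazin n n3 k A X"
  shows "qmat_drazin (bcirc_z n n n3 A) = bcirc_z n n n3 X"
proof (rule qmat_drazin_eqI[OF bcirc_z_carrier bcirc_z_carrier])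
  have "qt_prod n n n n3 (qt_prod n n n n3 (qt_pow n n3 A k) X) A = qt_pow n n3 A k"
    and "qt_prod n n n n3 (qt_prod n n n n3 X A) X = X"
    and "qt_prod n n n n3 A X = qt_prod n n n n3 X A"
    using assms(4) unfolding is_qt_drazin_def by auto
  then show "bcirc_z n n n3 A ^\<^sub>m k * bcirc_z n n n3 X * bcirc_z n n n3 A = bcirc_z n n n3 A ^\<^sub>m k"
    and "bcirc_z n n n3 X * bcirc_z n n n3 A * bcirc_z n n n3 X = bcirc_z n n n3 X"
    and "bcirc_z n n n3 A * bcirc_z n n n3 X = bcirc_z n n n3 X * bcirc_z n n n3 A"
    by (metis bcirc_z_qt_prod bcirc_z_qt_pow)+
qed

end
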